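(* Let $X$ be a random variable having finite CIGF $G_X(\alpha,\beta)$ for $(\alpha,\beta)\in D_X$, and let $\nu>0$, $\nu\notin\mathbb{N}$. If $(0,1)\in D_X$, then $$\mathcal{CRE}_\nu(X)=\frac{1}{\Gamma(\nu+1)}\left({}^{C}D^{\nu}_{-,\beta}G_X\right)(\alpha,\beta)\Big|_{\alpha=0,\beta=1}.$$ If $(1,0)\in D_X$, then $$\mathcal{CE}_\nu(X)=\frac{1}{\Gamma(\nu+1)}\left({}^{C}D^{\nu}_{-,\alpha}G_X\right)(\alpha,\beta)\Big|_{\alpha=1,\beta=0}.$$
   Context: For a random variable $X$ with CDF $F$ and survival function $\overline F=1-F$, let $l=\inf\{x:F(x)>0\}$, $r=\sup\{x:\overline F(x)>0\}$. The CIGF of $X$ is $G_X(\alpha,\beta)=\int_l^r [F(x)]^\alpha[\overline F(x)]^\beta\,dx$ on $D_X=\{(\alpha,\beta)\in\mathbb{R}^2: G_X(\alpha,\beta)<\infty\}$. The generalized fractional cumulative residual entropy is $\mathcal{CRE}_\nu(X)=\frac{1}{\Gamma(\nu+1)}\int_l^r\overline F(x)[-\log\overline F(x)]^\nu\,dx$ and the generalized fractional cumulative entropy is $\mathcal{CE}_\nu(X)=\frac{1}{\Gamma(\nu+1)}\int_l^r F(x)[-\log F(x)]^\nu\,dx$. For a function $y(x_1,x_2)$ and $\nu>0$, $\nu\notin\mathbb{N}$, with $n=\lfloor\nu\rfloor+1$, the left-sided Caputo partial fractional derivative with respect to $x_1$ of order $\nu$ is $\left({}^{C}D^\nu_{-,x_1}y\right)(x_1,x_2)=\frac{(-1)^n}{\Gamma(n-\nu)}\int_{x_1}^{+\infty}\frac{\partial_t^n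 y(t,x_2)}{(t-x_1)^{\nu+1-n}}\,dt$; the derivative with respect to $x_2$ is defined analogously. *)

theory Defs
  imports "HOL-Probability.Probability"
begin

text \<open>All notions are stated for a distribution function F (the CDF of X);
  survival function is 1 - F. Endpoints l, r are extended reals.\<close>

definition lend :: "(real \<Rightarrow> real) \<Rightarrow> ereal" where
  "lend F = Inf {ereal x | x. F x > 0}"

definition rend :: "(real \<Rightarrow> real) \<Rightarrow> ereal" where
  "rend F = Sup {ereal x | x. 1 - F x > 0}"

definition cigf_integrand :: "(real \<Rightarrow> real) \<Rightarrow> real \<Rightarrow> real \<Rightarrow> real \<Rightarrow> real" where
  "cigf_integrand F a b x = (F x) powr a * (1 - F x) powr b"

definition CIGF :: "(real \<Rightarrow> real) \<Rightarrow> real \<Rightarrow> real \<Rightarrow> real" where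
  "CIGF F a b = (LBINT x = lend F..rend F. cigf_integrand F a b x)"

definition CIGF_dom :: "(real \<Rightarrow> real) \<Rightarrow> (real \<times> real) set" where
  "CIGF_dom F = {(a, b). interval_lebesgue_integrable lborel (lend F) (rend F) (cigf_integrand F a b)}"

definition CRE_frac :: "(real \<Rightarrow> real) \<Rightarrow> real \<Rightarrow> real" where
  "CRE_frac F \<nu> = 1 / Gamma (\<nu> + 1) *
     (LBINT x = lend F..rend F. (1 - F x) * (- ln (1 - F x)) powr \<nu>)"

definition CE_frac :: "(real \<Rightarrow> real) \<Rightarrow> real \<Rightarrow> real" where
  "CE_frac F \<nu> = 1 / Gamma (\<nu> + 1) *
     (LBINT x = lend F..rend F. F x * (- ln (F x)) powr \<nu>)"

definition caputo_minus :: "real \<Rightarrow> (real \<Rightarrow> real) \<Rightarrow> real \<Rightarrow> real" where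
  "caputo_minus \<nu> g x =
     (let n = nat \<lfloor>\<nu>\<rfloor> + 1 in
       (-1) ^ n / Gamma (real n - \<nu>) *
       (LBINT t = ereal x..PInfty. (deriv ^^ n) g t / (t - x) powr (\<nu> + 1 - real n)))"

definition caputo_minus_x1 :: "real \<Rightarrow> (real \<Rightarrow> real \<Rightarrow> real) \<Rightarrow> real \<Rightarrow> real \<Rightarrow> real" where
  "caputo_minus_x1 \<nu> y x1 x2 = caputo_minus \<nu> (\<lambda>t. y t x2) x1"

definition caputo_minus_x2 :: "real \<Rightarrow> (real \<Rightarrow> real \<Rightarrow> real) \<Rightarrow> real \<Rightarrow> real \<Rightarrow> real" where
  "caputo_minus_x2 \<nu> y x1 x2 = caputo_minus \<nu> (\<lambda>t. y x1 t) x2"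

end

theory Submission
  imports Defs
begin

text \<open>On the open support interval S = (l, r) put u = 1 - F (for the CRE) or u = F (for the CE),
  so that 0 < u < 1 on S and the relevant section of the CIGF is H(t) = int_S u^t.  For t > 1 the
  integrand u^t |ln u|^k is dominated by a multiple of u, so H can be differentiated under the
  integral sign arbitrarily often, with n-th derivative int_S u^t (ln u)^n.  Inserting this into the
  Caputo derivative at 1 and exchanging the order of integration (Tonelli) leaves the inner integral
  int_1^oo u^t (-ln u)^n (t - 1)^(n - nu - 1) dt, which the substitution t = 1 + s / (-ln u) turns
  into Gamma(n - nu) u (-ln u)^nu.\<close>

lemma power_div_fact_le_exp:
  fixes x :: real
  assumes "0 \<le> x"
  shows "x ^ n / fact n \<le> exp x"
proof -
  have "(\<Sum>i\<in>{n}. inverse (fact i) * x ^ i) \<le> (\<Sum>i. inverse (fact i) * x ^ i)"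
    using assms by (intro sum_le_suminf summable_exp) auto
  then show ?thesis
    by (simp add: exp_def field_simps)
qed

lemma abs_ln_power_mult_powr_le:
  fixes v d :: real
  assumes "0 < v" "v \<le> 1" "0 < d"
  shows "\<bar>ln v\<bar> ^ k * v powr d \<le> fact k / d ^ k"
proof -
  define y where "y = - ln v"
  have "0 \<le> y" using assms by (simp add: y_def)
  then have "(d * y) ^ k / fact k \<le> exp (d * y)"
    using assms by (intro power_div_fact_le_exp) simp
  then have "d ^ k * y ^ k \<le> fact k * exp (d * y)"
    by (simp add: divide_simps power_mult_distrib mult.commute)
  then have "y ^ k \<le> fact k / d ^ k * exp (d * y)"
    using assms by (simp add: field_simps)
  moreover have "\<bar>ln v\<bar> = y" "v powr d = inverse (exp (d * y))"
    using assms \<open>0 \<le> y\<close> by (auto simp: y_def powr_def exp_minus[symmetric])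
  ultimately show ?thesis
    by (simp add: divide_inverse[symmetric] pos_divide_le_eq)
qed

lemma abs_powr_mult_ln_power_le:
  fixes v d t :: real
  assumes "0 < v" "v \<le> 1" "0 < d" "1 + d \<le> t"
  shows "\<bar>v powr t * ln v ^ k\<bar> \<le> fact k / d ^ k * v"
proof -
  have "\<bar>v powr t * ln v ^ k\<bar> = v * (\<bar>ln v\<bar> ^ k * v powr (t - 1))"
    using assms by (simp add: abs_mult power_abs powr_diff)
  also have "\<dots> \<le> v * (\<bar>ln v\<bar> ^ k * v powr d)"
    using assms by (intro mult_left_mono powr_mono') auto
  also have "\<dots> \<le> v * (fact k / d ^ k)"
    using assms by (intro mult_left_mono abs_ln_power_mult_powr_le) auto
  finally show ?thesis by (simp add: mult.commute)
qed

lemma abs_powr_mult_ln_power_diff_quotient_le: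
  fixes v d s t :: real
  assumes "0 < v" "v \<le> 1" "0 < d" "1 + d \<le> s" "1 + d \<le> t" "s \<noteq> t"
  shows "\<bar>(v powr s * ln v ^ k - v powr t * ln v ^ k) / (s - t)\<bar> \<le> fact (Suc k) / d ^ Suc k * v"
proof -
  define f where "f r = v powr r * ln v ^ k" for r
  have bound: "\<bar>(f b - f a) / (b - a)\<bar> \<le> fact (Suc k) / d ^ Suc k * v"
    if "1 + d \<le> a" "a < b" for a b
  proof -
    have "(f has_real_derivative v powr r * ln v ^ Suc k) (at r)" for r
      using assms unfolding f_def by (auto intro!: derivative_eq_intros simp: algebra_simps)
    then obtain z where z: "a < z" "f b - f a = (b - a) * (v powr z * ln v ^ Suc k)"
      using MVT2[OF \<open>a < b\<close>, of f "\<lambda>r. v powr r * ln v ^ Suc k"] by blast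
    then have "(f b - f a) / (b - a) = v powr z * ln v ^ Suc k"
      using that by simp
    moreover have "\<bar>v powr z * ln v ^ Suc k\<bar> \<le> fact (Suc k) / d ^ Suc k * v"
      using assms that z(1) by (intro abs_powr_mult_ln_power_le) auto
    ultimately show ?thesis
      by (simp only:)
  qed
  have swap: "(f s - f t) / (s - t) = (f t - f s) / (t - s)"
    by (metis minus_diff_eq minus_divide_divide)
  consider "s < t" | "t < s"
    using assms(6) by linarith
  then have "\<bar>(f s - f t) / (s - t)\<bar> \<le> fact (Suc k) / d ^ Suc k * v"
  proof cases
    case 1
    then show ?thesis
      unfolding swap using bound[of s t] assms(4) by blast
  next
    case 2
    then show ?thesis
      using bound[of t s] assms(5) by blast
  qed
  then show ?thesis
    unfolding f_def .
qed

lemma has_real_derivative_integral_dominated: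
  fixes f :: "real \<Rightarrow> 'a \<Rightarrow> real"
  assumes "open T" "t \<in> T"
    and integrable: "\<And>s. s \<in> T \<Longrightarrow> integrable M (f s)"
    and f'[measurable]: "f' \<in> borel_measurable M"
    and deriv: "\<And>x. x \<in> space M \<Longrightarrow> ((\<lambda>s. f s x) has_real_derivative f' x) (at t)"
    and w: "integrable M w"
    and bound: "\<And>s x. s \<in> T \<Longrightarrow> s \<noteq> t \<Longrightarrow> x \<in> space M \<Longrightarrow> \<bar>(f s x - f t x) / (s - t)\<bar> \<le> w x"
  shows "((\<lambda>s. integral\<^sup>L M (f s)) has_real_derivative integral\<^sup>L M f') (at t)"
proof -
  have "((\<lambda>s. integral\<^sup>L M (f s)) has_real_derivative integral\<^sup>L M f') (at t within T)"
    unfolding has_field_derivative_iff tendsto_at_iff_sequentially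
  proof (intro allI impI)
    fix X :: "nat \<Rightarrow> real" assume XT: "\<forall>i. X i \<in> T - {t}" and X: "X \<longlonglongrightarrow> t"
    have quotient: "integral\<^sup>L M (\<lambda>x. (f (X i) x - f t x) / (X i - t))
        = (integral\<^sup>L M (f (X i)) - integral\<^sup>L M (f t)) / (X i - t)" for i
      using XT integrable \<open>t \<in> T\<close> by simp
    have "(\<lambda>i. integral\<^sup>L M (\<lambda>x. (f (X i) x - f t x) / (X i - t))) \<longlonglongrightarrow> integral\<^sup>L M f'"
    proof (rule integral_dominated_convergence[OF f' _ w])
      show "(\<lambda>x. (f (X i) x - f t x) / (X i - t)) \<in> borel_measurable M" for i
        using XT integrable \<open>t \<in> T\<close> by (intro borel_measurable_divide borel_measurable_diff) auto
      show "AE x in M. (\<lambda>i. (f (X i) x - f t x) / (X i - t)) \<longlonglongrightarrow> f' x"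
      proof (rule AE_I2)
        fix x assume "x \<in> space M"
        then have "((\<lambda>s. (f s x - f t x) / (s - t)) \<longlongrightarrow> f' x) (at t)"
          using deriv[of x] by (simp add: has_field_derivative_iff)
        then show "(\<lambda>i. (f (X i) x - f t x) / (X i - t)) \<longlonglongrightarrow> f' x"
          using XT X unfolding tendsto_at_iff_sequentially by (auto simp: o_def)
      qed
      show "AE x in M. norm ((f (X i) x - f t x) / (X i - t)) \<le> w x" for i
        using XT bound by (intro AE_I2) auto
    qed
    then show "((\<lambda>s. (integral\<^sup>L M (f s) - integral\<^sup>L M (f t)) / (s - t)) \<circ> X) \<longlonglongrightarrow> integral\<^sup>L M f'"
      by (simp only: o_def quotient[symmetric])
  qed
  then show ?thesis
    using assms(1,2) at_within_open by metis
qed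

lemma nn_integral_Gamma_kernel:
  fixes v a :: real
  assumes v: "0 < v" "v < 1" and a: "0 < a"
  shows "(\<integral>\<^sup>+t. ennreal (indicator {1<..} t * (v powr t * (- ln v) ^ n) / (t - 1) powr (1 - a)) \<partial>lborel)
         = ennreal (Gamma a * v * (- ln v) powr (real n - a))"
proof -
  define L where "L = - ln v"
  define K where "K = v * L ^ n * L powr (1 - a)"
  define Q where "Q t = ennreal (indicator {1<..} t * (v powr t * L ^ n) / (t - 1) powr (1 - a))" for t
  have L: "0 < L" and K: "0 \<le> K"
    using v by (auto simp: L_def K_def)
  have Q_measurable: "Q \<in> borel_measurable borel"
    unfolding Q_def by measurable
  have Q_subst: "Q (1 + 1 / L * s) = ennreal K * ennreal (indicator {0..} s * s powr (a - 1) / exp s)" for s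
  proof (cases "0 < s")
    case True
    have "(1 + 1 / L * s) * ln v = ln v - s"
      using L by (simp add: L_def field_simps)
    then have "v powr (1 + 1 / L * s) = exp (ln v - s)"
      using v by (simp add: powr_def)
    also have "\<dots> = v / exp s"
      using v by (simp add: exp_diff)
    finally have 1: "v powr (1 + 1 / L * s) = v / exp s" .
    have 2: "(1 + 1 / L * s - 1) powr (1 - a) = s powr (1 - a) / L powr (1 - a)"
      using True L by (simp add: powr_divide)
    have 3: "s powr (a - 1) = 1 / s powr (1 - a)"
      using True by (simp add: powr_minus_divide[symmetric] powr_minus[symmetric])
    have "v powr (1 + 1 / L * s) * L ^ n / (1 + 1 / L * s - 1) powr (1 - a)
        = K * (s powr (a - 1) / exp s)"
      unfolding 1 2 3 using True by (simp add: K_def field_simps)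
    then show ?thesis
      using True L K by (simp add: Q_def ennreal_mult[symmetric])
  next
    case False
    then have "indicator {0..} s * s powr (a - 1) = (0::real)"
      by (cases "s = 0") auto
    with False L show ?thesis
      by (simp add: Q_def field_simps)
  qed
  have "(\<integral>\<^sup>+t. Q t \<partial>lborel) = ennreal (1 / L) * (\<integral>\<^sup>+s. Q (1 + 1 / L * s) \<partial>lborel)"
    using nn_integral_real_affine[OF Q_measurable, of "1 / L" 1] L by simp
  also have "(\<integral>\<^sup>+s. Q (1 + 1 / L * s) \<partial>lborel)
      = ennreal K * (\<integral>\<^sup>+s. ennreal (indicator {0..} s * s powr (a - 1) / exp s) \<partial>lborel)"
    unfolding Q_subst by (rule nn_integral_cmult) measurable
  also have "\<dots> = ennreal K * ennreal (Gamma a)"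
    using a by (simp add: Gamma_conv_nn_integral_real)
  also have "ennreal (1 / L) * (ennreal K * ennreal (Gamma a)) = ennreal (1 / L * (K * Gamma a))"
    using L K Gamma_real_pos[OF a] by (simp add: ennreal_mult del: times_divide_eq_left times_divide_eq_right)
  also have "1 / L * (K * Gamma a) = Gamma a * v * L powr (real n - a)"
    using L unfolding K_def
    by (simp add: powr_realpow[symmetric] powr_add[symmetric] powr_diff field_simps)
  finally show ?thesis
    by (simp add: Q_def L_def)
qed

definition log_moment :: "real set \<Rightarrow> (real \<Rightarrow> real) \<Rightarrow> nat \<Rightarrow> real \<Rightarrow> real" where
  "log_moment S u k t = (LBINT x:S. u x powr t * ln (u x) ^ k)"

lemma powr_mult_minus_ln_power:
  fixes v t :: real
  shows "v powr t * (- ln v) ^ k = (-1) ^ k * (v powr t * ln v ^ k)"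
  by (subst power_minus) (rule mult.left_commute)

lemma log_moment_minus_ln:
  "(LBINT x:S. u x powr t * (- ln (u x)) ^ k) = (-1) ^ k * log_moment S u k t"
  unfolding log_moment_def powr_mult_minus_ln_power by (rule set_integral_mult_right)

context
  fixes S :: "real set" and u :: "real \<Rightarrow> real"
  assumes S[measurable]: "S \<in> sets lborel"
    and u[measurable]: "u \<in> borel_measurable lborel"
    and u_bounds: "\<And>x. x \<in> S \<Longrightarrow> 0 < u x \<and> u x < 1"
    and u_integrable: "set_integrable lborel S u"
begin

lemma set_integrable_powr_mult_ln_power:
  assumes "1 < t"
  shows "set_integrable lborel S (\<lambda>x. u x powr t * ln (u x) ^ k)"
proof (rule set_integrable_bound[OF _ _ AE_I2])
  show "set_integrable lborel S (\<lambda>x. fact k / (t - 1) ^ k * u x)"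
    using u_integrable by simp
  show "set_borel_measurable lborel S (\<lambda>x. u x powr t * ln (u x) ^ k)"
    unfolding set_borel_measurable_def by measurable
  show "x \<in> S \<longrightarrow> norm (u x powr t * ln (u x) ^ k) \<le> norm (fact k / (t - 1) ^ k * u x)" for x
    using u_bounds[of x] assms abs_powr_mult_ln_power_le[of "u x" "t - 1" t k] by auto
qed

lemma has_real_derivative_log_moment:
  assumes "1 < t"
  shows "(log_moment S u k has_real_derivative log_moment S u (Suc k) t) (at t)"
proof -
  define d where "d = (t - 1) / 2"
  have d: "0 < d" "1 + d < t"
    using assms by (auto simp: d_def field_simps)
  have "((\<lambda>s. LINT x|lborel. indicator S x * (u x powr s * ln (u x) ^ k)) has_real_derivative
         (LINT x|lborel. indicator S x * (u x powr t * ln (u x) ^ Suc k))) (at t)"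
  proof (rule has_real_derivative_integral_dominated[where T="{1 + d<..}"
        and w="\<lambda>x. fact (Suc k) / d ^ Suc k * (indicator S x * u x)"])
    show "integrable lborel (\<lambda>x. indicator S x * (u x powr s * ln (u x) ^ k))"
      if "s \<in> {1 + d<..}" for s
      using set_integrable_powr_mult_ln_power[of s k] that d unfolding set_integrable_def by simp
    show "((\<lambda>s. indicator S x * (u x powr s * ln (u x) ^ k)) has_real_derivative
           indicator S x * (u x powr t * ln (u x) ^ Suc k)) (at t)" for x
      using u_bounds[of x] by (cases "x \<in> S") (auto intro!: derivative_eq_intros simp: algebra_simps)
    show "integrable lborel (\<lambda>x. fact (Suc k) / d ^ Suc k * (indicator S x * u x))"
      using u_integrable unfolding set_integrable_def by (intro integrable_mult_right) simp
    show "\<bar>(indicator S x * (u x powr s * ln (u x) ^ k) - indicator S x * (u x powr t * ln (u x) ^ k)) / (s - t)\<bar>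
          \<le> fact (Suc k) / d ^ Suc k * (indicator S x * u x)"
      if "s \<in> {1 + d<..}" "s \<noteq> t" for s x
      using u_bounds[of x] that d abs_powr_mult_ln_power_diff_quotient_le[of "u x" d s t k]
      by (cases "x \<in> S") (auto simp del: fact_Suc power_Suc)
  qed (use d in auto)
  then show ?thesis
    by (simp add: log_moment_def[abs_def] set_lebesgue_integral_def)
qed

lemma higher_deriv_log_moment:
  assumes "1 < t"
  shows "(deriv ^^ k) (log_moment S u 0) t = log_moment S u k t"
  using assms
proof (induction k arbitrary: t)
  case 0
  then show ?case by simp
next
  case (Suc k)
  have "((deriv ^^ k) (log_moment S u 0) has_real_derivative log_moment S u (Suc k) t) (at t)"
    by (rule has_field_derivative_transform_within_open[where S="{1<..}"])
       (use Suc has_real_derivative_log_moment in auto)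
  then show ?case
    by (simp add: DERIV_imp_deriv)
qed

lemma set_integral_Gamma_kernel:
  assumes a: "0 < a"
  shows "(LBINT t:{1<..}. (LBINT x:S. u x powr t * (- ln (u x)) ^ n) / (t - 1) powr (1 - a))
       = Gamma a * (LBINT x:S. u x * (- ln (u x)) powr (real n - a))"
proof -
  define P where "P t = (LBINT x:S. u x powr t * (- ln (u x)) ^ n)" for t
  define J where "J t x = indicator {1<..} t * (indicator S x * (u x powr t * (- ln (u x)) ^ n) / (t - 1) powr (1 - a))" for t x
  have J_nonneg: "0 \<le> J t x" for t x
    using u_bounds[of x] by (auto simp: J_def indicator_def)
  have [measurable]: "(\<lambda>(x, t). J t x) \<in> borel_measurable (lborel \<Otimes>\<^sub>M lborel)"
    unfolding J_def by measurable
  have [measurable]: "P \<in> borel_measurable borel"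
    unfolding P_def set_lebesgue_integral_def by measurable
  have P_nonneg: "0 \<le> P t" for t
    unfolding P_def set_lebesgue_integral_def
    by (intro integral_nonneg_AE AE_I2) (auto simp: indicator_def dest: u_bounds)
  have inner_x: "(\<integral>\<^sup>+x. ennreal (J t x) \<partial>lborel) = ennreal (indicator {1<..} t * (P t / (t - 1) powr (1 - a)))" for t
  proof (cases "1 < t")
    case True
    have J_eq: "J t = (\<lambda>x. indicator S x * (u x powr t * (- ln (u x)) ^ n) / (t - 1) powr (1 - a))"
      using True by (simp add: J_def fun_eq_iff)
    have "set_integrable lborel S (\<lambda>x. u x powr t * (- ln (u x)) ^ n)"
      unfolding powr_mult_minus_ln_power
      using True by (intro set_integrable_mult_right set_integrable_powr_mult_ln_power)
    then have "integrable lborel (J t)"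
      unfolding J_eq set_integrable_def by simp
    then have "(\<integral>\<^sup>+x. ennreal (J t x) \<partial>lborel) = ennreal (integral\<^sup>L lborel (J t))"
      by (intro nn_integral_eq_integral AE_I2 J_nonneg)
    also have "integral\<^sup>L lborel (J t) = P t / (t - 1) powr (1 - a)"
      unfolding J_eq P_def set_lebesgue_integral_def by simp
    finally show ?thesis
      using True by simp
  qed (simp add: J_def)
  have inner_t: "(\<integral>\<^sup>+t. ennreal (J t x) \<partial>lborel) = ennreal (indicator S x * (Gamma a * (u x * (- ln (u x)) powr (real n - a))))" for x
    using u_bounds[of x] a by (cases "x \<in> S") (simp_all add: J_def nn_integral_Gamma_kernel mult_ac)
  have "(LBINT t:{1<..}. P t / (t - 1) powr (1 - a))
      = enn2real (\<integral>\<^sup>+t. ennreal (indicator {1<..} t * (P t / (t - 1) powr (1 - a))) \<partial>lborel)"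
    unfolding set_lebesgue_integral_def real_scaleR_def using P_nonneg by (intro integral_eq_nn_integral) auto
  also have "\<dots> = enn2real (\<integral>\<^sup>+t. (\<integral>\<^sup>+x. ennreal (J t x) \<partial>lborel) \<partial>lborel)"
    by (simp add: inner_x)
  also have "\<dots> = enn2real (\<integral>\<^sup>+x. (\<integral>\<^sup>+t. ennreal (J t x) \<partial>lborel) \<partial>lborel)"
    by (subst lborel_pair.Fubini'[where f="\<lambda>x t. ennreal (J t x)"]) simp_all
  also have "\<dots> = (LINT x|lborel. indicator S x * (Gamma a * (u x * (- ln (u x)) powr (real n - a))))"
    unfolding inner_t using u_bounds Gamma_real_pos[OF a]
    by (intro integral_eq_nn_integral[symmetric]) (auto simp: indicator_def less_imp_le)
  finally show ?thesis
    by (simp add: P_def set_lebesgue_integral_def mult_ac)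
qed

lemma caputo_minus_log_moment:
  assumes "0 < \<nu>"
  shows "caputo_minus \<nu> (log_moment S u 0) 1 = (LBINT x:S. u x * (- ln (u x)) powr \<nu>)"
proof -
  define n where "n = nat \<lfloor>\<nu>\<rfloor> + 1"
  have "0 < real n - \<nu>"
    using assms unfolding n_def by linarith
  have exponents: "1 - (real n - \<nu>) = \<nu> + 1 - real n" "real n - (real n - \<nu>) = \<nu>"
    by simp_all
  have "(LBINT t = ereal 1..\<infinity>. (deriv ^^ n) (log_moment S u 0) t / (t - 1) powr (\<nu> + 1 - real n))
      = (LBINT t:{1<..}. (deriv ^^ n) (log_moment S u 0) t / (t - 1) powr (\<nu> + 1 - real n))"
    by (simp add: interval_lebesgue_integral_def)
  also have "\<dots> = (LBINT t:{1<..}. (-1) ^ n *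
          ((LBINT x:S. u x powr t * (- ln (u x)) ^ n) / (t - 1) powr (\<nu> + 1 - real n)))"
    by (intro set_lebesgue_integral_cong)
       (auto simp: higher_deriv_log_moment log_moment_minus_ln power_mult_distrib[symmetric])
  also have "\<dots> = (-1) ^ n * (Gamma (real n - \<nu>) * (LBINT x:S. u x * (- ln (u x)) powr \<nu>))"
    using set_integral_Gamma_kernel[OF \<open>0 < real n - \<nu>\<close>, of n, unfolded exponents]
    by (simp only: set_integral_mult_right)
  finally show ?thesis
    unfolding caputo_minus_def Let_def n_def[symmetric]
    using Gamma_real_pos[OF \<open>0 < real n - \<nu>\<close>] by (simp add: power_mult_distrib[symmetric])
qed

end

lemma lend_le_rend: "lend F \<le> rend F"
proof (rule ccontr)
  assume "\<not> lend F \<le> rend F"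
  then obtain z where z: "rend F < ereal z" "ereal z < lend F"
    using ereal_dense2 not_le by metis
  have "\<not> 0 < F z"
    using z(2) Inf_lower[of "ereal z" "{ereal x | x. F x > 0}"] by (auto simp: lend_def)
  then have "ereal z \<le> rend F"
    unfolding rend_def by (intro Sup_upper) auto
  with z(1) show False
    by simp
qed

lemma mono_0_less_less_1_on_einterval:
  assumes "mono F" "x \<in> einterval (lend F) (rend F)"
  shows "0 < F x \<and> F x < 1"
proof -
  obtain y where "0 < F y" "y < x"
    using assms(2) unfolding einterval_iff lend_def Inf_less_iff by auto
  moreover obtain w where "0 < 1 - F w" "x < w"
    using assms(2) unfolding einterval_iff rend_def less_Sup_iff by auto
  ultimately show ?thesis
    using monoD[OF assms(1), of y x] monoD[OF assms(1), of x w] by auto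
qed

lemma interval_lebesgue_integral_lend_rend:
  "(LBINT x=lend F..rend F. f x) = (LBINT x:einterval (lend F) (rend F). f x)"
  using lend_le_rend by (simp add: interval_lebesgue_integral_def)

lemma interval_lebesgue_integrable_lend_rend:
  "interval_lebesgue_integrable lborel (lend F) (rend F) f \<longleftrightarrow> set_integrable lborel (einterval (lend F) (rend F)) f"
  using lend_le_rend by (simp add: interval_lebesgue_integrable_def)

lemma CRE_frac_eq_caputo_minus_x2:
  assumes "mono F" "0 < \<nu>" "(0, 1) \<in> CIGF_dom F"
  shows "CRE_frac F \<nu> = 1 / Gamma (\<nu> + 1) * caputo_minus_x2 \<nu> (CIGF F) 0 1"
proof -
  define S where "S = einterval (lend F) (rend F)"
  have S: "S \<in> sets lborel"
    by (simp add: S_def)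
  have F_bounds: "0 < F x \<and> F x < 1" if "x \<in> S" for x
    using mono_0_less_less_1_on_einterval[OF assms(1)] that unfolding S_def by blast
  have [measurable]: "F \<in> borel_measurable borel"
    using assms(1) by (rule borel_measurable_mono)
  have "set_integrable lborel S (cigf_integrand F 0 1)"
    using assms(3) by (simp add: CIGF_dom_def interval_lebesgue_integrable_lend_rend S_def)
  then have integrable: "set_integrable lborel S (\<lambda>x. 1 - F x)"
    by (rule set_integrable_cong[THEN iffD1, rotated -1]) (auto simp: cigf_integrand_def dest!: F_bounds)
  have "CIGF F 0 = log_moment S (\<lambda>x. 1 - F x) 0"
    unfolding CIGF_def interval_lebesgue_integral_lend_rend log_moment_def S_def[symmetric]
    by (intro ext set_lebesgue_integral_cong S) (auto simp: cigf_integrand_def dest!: F_bounds)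
  moreover have "caputo_minus \<nu> (log_moment S (\<lambda>x. 1 - F x) 0) 1 = (LBINT x:S. (1 - F x) * (- ln (1 - F x)) powr \<nu>)"
    using F_bounds by (intro caputo_minus_log_moment S integrable assms(2)) auto
  ultimately show ?thesis
    by (simp add: CRE_frac_def caputo_minus_x2_def interval_lebesgue_integral_lend_rend S_def)
qed

lemma CE_frac_eq_caputo_minus_x1:
  assumes "mono F" "0 < \<nu>" "(1, 0) \<in> CIGF_dom F"
  shows "CE_frac F \<nu> = 1 / Gamma (\<nu> + 1) * caputo_minus_x1 \<nu> (CIGF F) 1 0"
proof -
  define S where "S = einterval (lend F) (rend F)"
  have S: "S \<in> sets lborel"
    by (simp add: S_def)
  have F_bounds: "0 < F x \<and> F x < 1" if "x \<in> S" for x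
    using mono_0_less_less_1_on_einterval[OF assms(1)] that unfolding S_def by blast
  have [measurable]: "F \<in> borel_measurable borel"
    using assms(1) by (rule borel_measurable_mono)
  have "set_integrable lborel S (cigf_integrand F 1 0)"
    using assms(3) by (simp add: CIGF_dom_def interval_lebesgue_integrable_lend_rend S_def)
  then have integrable: "set_integrable lborel S F"
    by (rule set_integrable_cong[THEN iffD1, rotated -1]) (auto simp: cigf_integrand_def dest!: F_bounds)
  have "(\<lambda>t. CIGF F t 0) = log_moment S F 0"
    unfolding CIGF_def interval_lebesgue_integral_lend_rend log_moment_def S_def[symmetric]
    by (intro ext set_lebesgue_integral_cong S) (auto simp: cigf_integrand_def dest!: F_bounds)
  moreover have "caputo_minus \<nu> (log_moment S F 0) 1 = (LBINT x:S. F x * (- ln (F x)) powr \<nu>)"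
    using F_bounds by (intro caputo_minus_log_moment S integrable assms(2)) auto
  ultimately show ?thesis
    by (simp add: CE_frac_def caputo_minus_x1_def interval_lebesgue_integral_lend_rend S_def)
qed

theorem proposition3:
  fixes M :: "'a measure" and X :: "'a \<Rightarrow> real" and \<nu> :: real
  assumes "prob_space M"
    and "X \<in> borel_measurable M"
    and "\<nu> > 0" and "\<nu> \<notin> \<nat>"
  defines "F \<equiv> cdf (distr M borel X)"
  shows "((0, 1) \<in> CIGF_dom F \<longrightarrow>
            CRE_frac F \<nu> = 1 / Gamma (\<nu> + 1) * caputo_minus_x2 \<nu> (CIGF F) 0 1)
       \<and> ((1, 0) \<in> CIGF_dom F \<longrightarrow>
            CE_frac F \<nu> = 1 / Gamma (\<nu> + 1) * caputo_minus_x1 \<nu> (CIGF F) 1 0)"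
proof -
  interpret D: real_distribution "distr M borel X"
    using assms(1,2) by (simp add: prob_space.real_distribution_distr)
  have "mono F"
    unfolding F_def by (intro monoI D.cdf_nondecreasing)
  then show ?thesis
    using CRE_frac_eq_caputo_minus_x2 CE_frac_eq_caputo_minus_x1 \<open>\<nu> > 0\<close> by blast
qed

end
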